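(* Let $\mathbf{K}$ be an algebraically closed field and let $f,g\in\mathrm{Aut}(\mathbb G_m^2)$ be two loxodromic automorphisms of the algebraic torus $\mathbb G_m^2$ over $\mathbf{K}$. Then $\mathrm{Per}(f)\cap\mathrm{Per}(g)\neq\emptyset$ if and only if $\mathrm{Per}(f)=\mathrm{Per}(g)$.
   Context: Every $\mathbf{K}$-automorphism of $\mathbb G_m^2$ has the form $(x,y)\mapsto(\alpha x^ay^b,\beta x^cy^d)$ with $\alpha,\beta\in\mathbf{K}^\times$ and $\begin{pmatrix}a&b\\c&d\end{pmatrix}\in\mathrm{GL}_2(\mathbf Z)$. An automorphism is loxodromic if its first dynamical degree $\lambda_1(f)=\lim_N((f^N)^*H\cdot H)^{1/N}$ (for $H$ ample on a projective completion) is $>1$. $\mathrm{Per}(f)$ is the set of periodic points of $f$. *)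

theory Defs
  imports Complex_Main "HOL-Computational_Algebra.Polynomial"
begin

definition torus :: "('k::field \<times> 'k) set" where
  "torus = {(x, y). x \<noteq> 0 \<and> y \<noteq> 0}"

text \<open>Integer 2x2 matrices as quadruples (a,b,c,d) = [[a,b],[c,d]].\<close>
type_synonym imat2 = "int \<times> int \<times> int \<times> int"

definition imat2_det :: "imat2 \<Rightarrow> int" where
  "imat2_det M = (case M of (a, b, c, d) \<Rightarrow> a * d - b * c)"

definition imat2_mult :: "imat2 \<Rightarrow> imat2 \<Rightarrow> imat2" where
  "imat2_mult M M' = (case M of (a, b, c, d) \<Rightarrow> case M' of (a', b', c', d') \<Rightarrow>
     (a * a' + b * c', a * b' + b * d', c * a' + d * c', c * b' + d * d'))"

definition imat2_pow :: "imat2 \<Rightarrow> nat \<Rightarrow> imat2" where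
  "imat2_pow M n = ((imat2_mult M) ^^ n) (1, 0, 0, 1)"

definition tmap :: "'k::field \<Rightarrow> 'k \<Rightarrow> imat2 \<Rightarrow> 'k \<times> 'k \<Rightarrow> 'k \<times> 'k" where
  "tmap \<alpha> \<beta> M p = (case M of (a, b, c, d) \<Rightarrow> case p of (x, y) \<Rightarrow>
     (\<alpha> * x powi a * y powi b, \<beta> * x powi c * y powi d))"

definition is_torus_aut :: "'k::field \<Rightarrow> 'k \<Rightarrow> imat2 \<Rightarrow> bool" where
  "is_torus_aut \<alpha> \<beta> M \<longleftrightarrow> \<alpha> \<noteq> 0 \<and> \<beta> \<noteq> 0 \<and> \<bar>imat2_det M\<bar> = 1"

definition Per :: "('k::field \<times> 'k \<Rightarrow> 'k \<times> 'k) \<Rightarrow> ('k \<times> 'k) set" where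
  "Per f = {p \<in> torus. \<exists>n::nat. n \<ge> 1 \<and> (f ^^ n) p = p}"

text \<open>Degree of a monomial map with exponent matrix M, viewed as a rational
  self-map of P^2 \<supseteq> G_m^2; equals (f^* H \<cdot> H) for H a line in P^2.
  Homogenising (1, x^a y^b, x^c y^d) gives exponent vectors
  (0,0,0), (-a-b,a,b), (-c-d,c,d); clearing denominators gives this degree.\<close>
definition mono_deg :: "imat2 \<Rightarrow> int" where
  "mono_deg M = (case M of (a, b, c, d) \<Rightarrow>
     max 0 (max (a + b) (c + d)) - min 0 (min a c) - min 0 (min b d))"

text \<open>First dynamical degree: lim_N ((f^N)^* H \<cdot> H)^(1/N); f^N is monomial with matrix M^N.\<close>
definition lambda1 :: "imat2 \<Rightarrow> real" where
  "lambda1 M = lim (\<lambda>N. real_of_int (mono_deg (imat2_pow M N)) powr (1 / real N))"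

definition loxodromic :: "imat2 \<Rightarrow> bool" where
  "loxodromic M \<longleftrightarrow> lambda1 M > 1"

end

(*
  Write f = tmap alpha beta M as a translation composed with the monomial map of M, so that
  f^n (p z) = f^n(p) M^n(z).  If tr(M^2) <= 2, the powers of M, given by Cayley-Hamilton
  through Lucas sequences, grow at most linearly, hence so does the degree of f^n and
  lambda1 = 1.  So a loxodromic M has tr(M^2) >= 3, and then tr(M^(2k)) >= 3, that is
  det(M^(2k) - 1) is nonzero, for all k >= 1.
  Given one periodic point p, any other periodic point is q = p z with z fixed by a monomial
  map whose matrix minus the identity is invertible, which forces z to be torsion; conversely
  a monomial automorphism permutes the finitely many torsion points of a given order, so
  p z is periodic for torsion z.  Thus Per(f) is the coset of the torsion subgroup through
  any of its points, and two such sets that meet are equal.  Per(f) is nonempty because over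
  an algebraically closed field a monomial map of nonzero determinant is surjective, which
  yields a fixed point of f^2.
*)

theory Submission
  imports Defs "HOL-Real_Asymp.Real_Asymp"
begin

definition imat2_trace :: "imat2 \<Rightarrow> int" where
  "imat2_trace M = (case M of (a, b, c, d) \<Rightarrow> a + d)"

definition imat2_adj :: "imat2 \<Rightarrow> imat2" where
  "imat2_adj M = (case M of (a, b, c, d) \<Rightarrow> (d, - b, - c, a))"

definition imat2_sub_id :: "imat2 \<Rightarrow> imat2" where
  "imat2_sub_id M = (case M of (a, b, c, d) \<Rightarrow> (a - 1, b, c, d - 1))"

section \<open>Integer 2x2 matrices\<close>

lemma imat2_pow_0 [simp]: "imat2_pow M 0 = (1, 0, 0, 1)"
  by (simp add: imat2_pow_def)

lemma imat2_pow_Suc: "imat2_pow M (Suc n) = imat2_mult M (imat2_pow M n)"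
  by (simp add: imat2_pow_def)

lemma imat2_mult_assoc: "imat2_mult (imat2_mult A B) C = imat2_mult A (imat2_mult B C)"
  by (cases A; cases B; cases C) (simp add: imat2_mult_def algebra_simps)

lemma imat2_mult_id_left [simp]: "imat2_mult (1, 0, 0, 1) A = A"
  by (cases A) (simp add: imat2_mult_def)

lemma imat2_mult_id_right [simp]: "imat2_mult A (1, 0, 0, 1) = A"
  by (cases A) (simp add: imat2_mult_def)

lemma imat2_pow_add: "imat2_pow M (m + n) = imat2_mult (imat2_pow M m) (imat2_pow M n)"
  by (induction m) (simp_all add: imat2_pow_Suc imat2_mult_assoc)

lemma imat2_pow_mult: "imat2_pow M (m * n) = imat2_pow (imat2_pow M m) n"
  by (induction n) (simp_all add: imat2_pow_Suc imat2_pow_add)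

lemma imat2_det_mult: "imat2_det (imat2_mult A B) = imat2_det A * imat2_det B"
  by (cases A; cases B) (simp add: imat2_mult_def imat2_det_def algebra_simps)

lemma imat2_det_pow: "imat2_det (imat2_pow M n) = imat2_det M ^ n"
  by (induction n) (simp_all add: imat2_det_def[of "(1, 0, 0, 1)"] imat2_pow_Suc imat2_det_mult)

lemma imat2_det_sq: "\<bar>imat2_det M\<bar> = 1 \<Longrightarrow> imat2_det (imat2_pow M 2) = 1"
  by (metis imat2_det_pow power2_abs power_one)

lemma imat2_mult_adj: "imat2_mult M (imat2_adj M) = (imat2_det M, 0, 0, imat2_det M)"
  by (cases M) (simp add: imat2_mult_def imat2_adj_def imat2_det_def)

lemma imat2_adj_mult: "imat2_mult (imat2_adj M) M = (imat2_det M, 0, 0, imat2_det M)"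
  by (cases M) (simp add: imat2_mult_def imat2_adj_def imat2_det_def algebra_simps)

lemma imat2_det_sub_id: "imat2_det (imat2_sub_id M) = imat2_det M - imat2_trace M + 1"
  by (cases M) (simp add: imat2_det_def imat2_sub_id_def imat2_trace_def algebra_simps)

fun lucas_U :: "int \<Rightarrow> int \<Rightarrow> nat \<Rightarrow> int" where
  "lucas_U P Q 0 = 0"
| "lucas_U P Q (Suc 0) = 1"
| "lucas_U P Q (Suc (Suc n)) = P * lucas_U P Q (Suc n) - Q * lucas_U P Q n"

lemma imat2_pow_Suc_lucas_U:
  assumes "M = (a, b, c, d)" and "t = imat2_trace M" and "e = imat2_det M"
  shows "imat2_pow M (Suc n) =
    (lucas_U t e (Suc n) * a - e * lucas_U t e n, lucas_U t e (Suc n) * b,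
     lucas_U t e (Suc n) * c, lucas_U t e (Suc n) * d - e * lucas_U t e n)"
proof (induction n)
  case 0
  then show ?case using assms by (simp add: imat2_pow_Suc)
next
  case (Suc n)
  then show ?case
    unfolding imat2_pow_Suc[of M "Suc n"] Suc.IH lucas_U.simps
    using assms(1) by (simp add: assms(2,3) imat2_mult_def imat2_trace_def imat2_det_def algebra_simps)
qed

lemma lucas_U_strict_mono:
  assumes "P \<ge> 3"
  shows "0 \<le> lucas_U P 1 n \<and> lucas_U P 1 n < lucas_U P 1 (Suc n)"
proof (induction n)
  case 0
  then show ?case by simp
next
  case (Suc n)
  have "P * lucas_U P 1 (Suc n) \<ge> 3 * lucas_U P 1 (Suc n)"
    using Suc assms by (intro mult_right_mono) auto
  moreover have "lucas_U P 1 (Suc (Suc n)) = P * lucas_U P 1 (Suc n) - lucas_U P 1 n"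
    by simp
  ultimately show ?case using Suc by linarith
qed

lemma imat2_trace_pow_ge_3:
  assumes "imat2_det A = 1" and "imat2_trace A \<ge> 3" and "k \<ge> 1"
  shows "imat2_trace (imat2_pow A k) \<ge> 3"
proof -
  obtain n where k: "k = Suc n" using \<open>k \<ge> 1\<close> by (cases k) auto
  obtain a b c d where A: "A = (a, b, c, d)" by (cases A) auto
  define t where "t = imat2_trace A"
  let ?U = "lucas_U t 1"
  have "imat2_trace (imat2_pow A k) = t * ?U (Suc n) - 2 * ?U n"
    using imat2_pow_Suc_lucas_U[OF A t_def refl, of n] assms(1)
    by (simp add: k A t_def imat2_trace_def algebra_simps)
  moreover have "0 \<le> ?U n" "?U n < ?U (Suc n)"
    using lucas_U_strict_mono assms(2) t_def by auto
  moreover have "t * ?U (Suc n) \<ge> 3 * ?U (Suc n)"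
    using calculation(2,3) assms(2) t_def by (intro mult_right_mono) auto
  ultimately show ?thesis by linarith
qed

lemma imat2_det_sub_id_pow_neq_0:
  assumes "imat2_det A = 1" and "imat2_trace A \<ge> 3" and "k \<ge> 1"
  shows "imat2_det (imat2_sub_id (imat2_pow A k)) \<noteq> 0"
  using imat2_trace_pow_ge_3[OF assms] assms(1)
  by (simp add: imat2_det_sub_id imat2_det_pow)

section \<open>Non-hyperbolic matrices are not loxodromic\<close>

lemma lucas_U_2_1: "lucas_U 2 1 n = int n"
  by (induction "2::int" "1::int" n rule: lucas_U.induct) auto

lemma lucas_U_minus_2_1: "lucas_U (-2) 1 n = (-1) ^ Suc n * int n"
  by (induction "-2::int" "1::int" n rule: lucas_U.induct) (auto simp: algebra_simps)

lemma abs_le_1_if_abs_periodic: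
  fixes f :: "nat \<Rightarrow> int"
  assumes "k > 0" and "\<And>n. \<bar>f (n + k)\<bar> = \<bar>f n\<bar>" and "\<And>n. n < k \<Longrightarrow> \<bar>f n\<bar> \<le> 1"
  shows "\<bar>f n\<bar> \<le> 1"
proof (induction n rule: less_induct)
  case (less n)
  show ?case
  proof (cases "n < k")
    case False
    then obtain m where "n = m + k" by (metis add.commute le_add_diff_inverse not_less)
    then show ?thesis using less.IH[of m] assms(1,2) by simp
  qed (use assms(3) in auto)
qed

lemma lucas_U_abs_le:
  assumes "(Q = 1 \<and> \<bar>P\<bar> \<le> 2) \<or> (Q = -1 \<and> P = 0)"
  shows "\<bar>lucas_U P Q n\<bar> \<le> int n"
proof -
  have small: "\<bar>lucas_U P Q n\<bar> \<le> int n" if "\<bar>lucas_U P Q n\<bar> \<le> 1"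
    using that by (cases n) auto
  \<comment> \<open>for \<open>\<bar>P\<bar> \<le> 1\<close> the sequence is periodic up to sign\<close>
  consider "Q = 1" "P = 2" | "Q = 1" "P = -2" | "Q = 1" "P \<in> {-1, 1}" | "Q \<in> {-1, 1}" "P = 0"
    using assms by fastforce
  then show ?thesis
  proof cases
    case 1
    then show ?thesis by (simp add: lucas_U_2_1)
  next
    case 2
    then show ?thesis by (simp add: lucas_U_minus_2_1 abs_mult)
  next
    case 3
    show ?thesis
      by (rule small, rule abs_le_1_if_abs_periodic[where k=3])
        (use 3 in \<open>auto simp: numeral_3_eq_3 less_Suc_eq\<close>)
  next
    case 4
    show ?thesis
      by (rule small, rule abs_le_1_if_abs_periodic[where k=2])
        (use 4 in \<open>auto simp: numeral_2_eq_2 less_Suc_eq\<close>)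
  qed
qed

lemma mono_deg_le: "mono_deg (a, b, c, d) \<le> 2 * (\<bar>a\<bar> + \<bar>b\<bar> + \<bar>c\<bar> + \<bar>d\<bar>)"
  unfolding mono_deg_def by (simp add: max_def min_def) arith

lemma mono_deg_ge_1: "a * d - b * c \<noteq> 0 \<Longrightarrow> 1 \<le> mono_deg (a, b, c, d)"
  unfolding mono_deg_def by (auto simp: max_def min_def) (smt (verit) mult_eq_0_iff)

lemma imat2_trace_sq: "imat2_trace (imat2_pow M 2) = imat2_trace M ^ 2 - 2 * imat2_det M"
  by (cases M) (simp add: numeral_2_eq_2 imat2_pow_Suc imat2_mult_def imat2_trace_def
      imat2_det_def power2_eq_square algebra_simps)

lemma mono_deg_pow_le_linear:
  assumes "\<bar>imat2_det M\<bar> = 1" and "imat2_trace (imat2_pow M 2) \<le> 2"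
  obtains C where "\<And>n. n \<ge> 1 \<Longrightarrow> mono_deg (imat2_pow M n) \<le> C * int n"
proof -
  obtain a b c d where M: "M = (a, b, c, d)" by (cases M) auto
  define t where "t = imat2_trace M"
  define e where "e = imat2_det M"
  have "t\<^sup>2 \<le> 2 + 2 * e" using assms(2) by (simp add: imat2_trace_sq t_def e_def)
  moreover have "e = 1 \<or> e = -1" using assms(1) e_def by auto
  ultimately have "(e = 1 \<and> \<bar>t\<bar> \<le> 2) \<or> (e = -1 \<and> t = 0)"
    using abs_le_square_iff[of t 2, simplified] by fastforce
  then have U_lin: "\<bar>lucas_U t e n\<bar> \<le> int n" for n
    by (rule lucas_U_abs_le)
  have "mono_deg (imat2_pow M n) \<le> 2 * (\<bar>a\<bar> + \<bar>b\<bar> + \<bar>c\<bar> + \<bar>d\<bar> + 2) * int n"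
    if "n \<ge> 1" for n
  proof -
    obtain m where n: "n = Suc m" using \<open>n \<ge> 1\<close> by (cases n) auto
    let ?u = "lucas_U t e n" and ?v = "lucas_U t e m"
    have u: "\<bar>?u\<bar> \<le> int n" and v: "\<bar>?v\<bar> \<le> int n" using U_lin[of n] U_lin[of m] n by auto
    have diag: "\<bar>?u * x - e * ?v\<bar> \<le> int n * \<bar>x\<bar> + int n" for x
    proof -
      have "\<bar>?u * x - e * ?v\<bar> \<le> \<bar>?u\<bar> * \<bar>x\<bar> + \<bar>?v\<bar>"
        using abs_triangle_ineq4[of "?u * x" "e * ?v"] assms(1) by (simp add: abs_mult e_def)
      also have "\<dots> \<le> int n * \<bar>x\<bar> + int n"
        using u v by (intro add_mono mult_right_mono) auto
      finally show ?thesis .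
    qed
    have off_diag: "\<bar>?u * x\<bar> \<le> int n * \<bar>x\<bar>" for x
      using u by (simp add: abs_mult mult_right_mono)
    have "mono_deg (imat2_pow M n)
        \<le> 2 * (\<bar>?u * a - e * ?v\<bar> + \<bar>?u * b\<bar> + \<bar>?u * c\<bar> + \<bar>?u * d - e * ?v\<bar>)"
      using imat2_pow_Suc_lucas_U[OF M t_def e_def, of m] mono_deg_le by (simp add: n)
    also have "\<dots> \<le> 2 * ((int n * \<bar>a\<bar> + int n) + int n * \<bar>b\<bar> + int n * \<bar>c\<bar> + (int n * \<bar>d\<bar> + int n))"
      by (intro mult_left_mono add_mono diag off_diag) simp
    also have "\<dots> = 2 * (\<bar>a\<bar> + \<bar>b\<bar> + \<bar>c\<bar> + \<bar>d\<bar> + 2) * int n"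
      by (simp add: algebra_simps)
    finally show ?thesis .
  qed
  then show thesis by (rule that)
qed

lemma lambda1_eq_1_if_mono_deg_linear:
  assumes "imat2_det M \<noteq> 0" and "\<And>n. n \<ge> 1 \<Longrightarrow> mono_deg (imat2_pow M n) \<le> C * int n"
  shows "lambda1 M = 1"
proof -
  define D where "D n = real_of_int (mono_deg (imat2_pow M n))" for n
  have D_lower: "1 \<le> D n" for n
  proof -
    obtain a b c d where "imat2_pow M n = (a, b, c, d)" by (cases "imat2_pow M n") auto
    moreover have "imat2_det (imat2_pow M n) \<noteq> 0" using assms(1) by (simp add: imat2_det_pow)
    ultimately show ?thesis using mono_deg_ge_1 by (simp add: D_def imat2_det_def)
  qed
  have D_upper: "D n \<le> C * real n" if "n \<ge> 1" for n
    using assms(2)[OF that] unfolding D_def by (metis of_int_le_iff of_int_mult of_int_of_nat_eq)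
  have "C > 0" using D_lower[of 1] D_upper[of 1] by simp
  then have C_lim: "(\<lambda>n. (C * real n) powr (1 / real n)) \<longlonglongrightarrow> 1"
    by real_asymp
  have "(\<lambda>n. D n powr (1 / real n)) \<longlonglongrightarrow> 1"
  proof (rule tendsto_sandwich[OF _ _ tendsto_const C_lim])
    show "\<forall>\<^sub>F n in sequentially. 1 \<le> D n powr (1 / real n)"
      using D_lower by (intro always_eventually allI ge_one_powr_ge_zero) auto
    show "\<forall>\<^sub>F n in sequentially. D n powr (1 / real n) \<le> (C * real n) powr (1 / real n)"
      using D_lower D_upper
      by (intro eventually_sequentiallyI[of 1] powr_mono2) (auto intro: order_trans[OF zero_le_one])
  qed
  then show ?thesis unfolding lambda1_def D_def by (rule limI)
qed

lemma loxodromic_imp_trace_sq_ge_3: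
  assumes "\<bar>imat2_det M\<bar> = 1" and "loxodromic M"
  shows "imat2_trace (imat2_pow M 2) \<ge> 3"
proof (rule ccontr)
  assume "\<not> imat2_trace (imat2_pow M 2) \<ge> 3"
  then obtain C where "\<And>n. n \<ge> 1 \<Longrightarrow> mono_deg (imat2_pow M n) \<le> C * int n"
    using mono_deg_pow_le_linear[OF assms(1)] by fastforce
  then have "lambda1 M = 1" using assms(1) by (intro lambda1_eq_1_if_mono_deg_linear) auto
  then show False using assms(2) by (simp add: loxodromic_def)
qed

section \<open>Monomial maps of the torus\<close>

definition tmult :: "'k::field \<times> 'k \<Rightarrow> 'k \<times> 'k \<Rightarrow> 'k \<times> 'k" where
  "tmult p q = (fst p * fst q, snd p * snd q)"

definition monom_map :: "imat2 \<Rightarrow> 'k::field \<times> 'k \<Rightarrow> 'k \<times> 'k" where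
  "monom_map M = tmap 1 1 M"

definition torsion :: "('k::field \<times> 'k) set" where
  "torsion = {z \<in> torus. \<exists>m::nat. m \<ge> 1 \<and> fst z ^ m = 1 \<and> snd z ^ m = 1}"

lemma mem_torus_iff [simp]: "(x, y) \<in> torus \<longleftrightarrow> x \<noteq> 0 \<and> y \<noteq> 0"
  by (simp add: torus_def)

lemma tmult_Pair [simp]: "tmult (x, y) (u, v) = (x * u, y * v)"
  by (simp add: tmult_def)

lemma tmult_assoc: "tmult (tmult p q) r = tmult p (tmult q r)"
  by (simp add: tmult_def mult.assoc)

lemma tmult_one_left [simp]: "tmult (1, 1) p = p"
  by (simp add: tmult_def)

lemma tmult_one_right [simp]: "tmult p (1, 1) = p"
  by (simp add: tmult_def)

lemma tmult_in_torus: "p \<in> torus \<Longrightarrow> q \<in> torus \<Longrightarrow> tmult p q \<in> torus"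
  by (cases p; cases q) simp

lemma tmult_left_cancel: "p \<in> torus \<Longrightarrow> tmult p z = tmult p w \<Longrightarrow> z = w"
  by (cases p; cases z; cases w) simp

lemma monom_map_Pair: "monom_map (a, b, c, d) (x, y) = (x powi a * y powi b, x powi c * y powi d)"
  by (simp add: monom_map_def tmap_def)

lemma monom_map_in_torus: "p \<in> torus \<Longrightarrow> monom_map M p \<in> torus"
  by (cases M; cases p) (simp add: monom_map_Pair)

lemma tmap_eq_tmult_monom_map: "tmap \<alpha> \<beta> M p = tmult (\<alpha>, \<beta>) (monom_map M p)"
  by (cases M; cases p) (simp add: monom_map_def tmap_def)

lemma funpow_tmap_in_torus:
  "\<alpha> \<noteq> 0 \<Longrightarrow> \<beta> \<noteq> 0 \<Longrightarrow> p \<in> torus \<Longrightarrow> (tmap \<alpha> \<beta> M ^^ n) p \<in> torus"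
  by (induction n) (auto simp: tmap_eq_tmult_monom_map intro!: tmult_in_torus monom_map_in_torus)

lemma monom_map_tmult: "monom_map M (tmult p q) = tmult (monom_map M p) (monom_map M q)"
  by (cases M; cases p; cases q) (simp add: monom_map_Pair power_int_mult_distrib algebra_simps)

lemma monom_map_monom_map:
  "p \<in> torus \<Longrightarrow> monom_map M (monom_map N p) = monom_map (imat2_mult M N) p"
  by (cases M; cases N; cases p)
    (simp add: monom_map_Pair imat2_mult_def power_int_mult_distrib power_int_add mult_ac
      flip: power_int_mult)

lemma monom_map_id [simp]: "monom_map (1, 0, 0, 1) p = p"
  by (cases p) (simp add: monom_map_Pair)

lemma monom_map_eq_tmult_sub_id:
  "p \<in> torus \<Longrightarrow> monom_map M p = tmult p (monom_map (imat2_sub_id M) p)"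
  by (cases M; cases p) (simp add: monom_map_Pair imat2_sub_id_def power_int_diff field_simps)

lemma tmap_tmult: "tmap \<alpha> \<beta> M (tmult p z) = tmult (tmap \<alpha> \<beta> M p) (monom_map M z)"
  by (simp add: tmap_eq_tmult_monom_map monom_map_tmult tmult_assoc)

lemma funpow_tmap_tmult:
  assumes "z \<in> torus"
  shows "(tmap \<alpha> \<beta> M ^^ n) (tmult p z) = tmult ((tmap \<alpha> \<beta> M ^^ n) p) (monom_map (imat2_pow M n) z)"
proof (induction n)
  case 0
  then show ?case by simp
next
  case (Suc n)
  then show ?case
    by (simp add: tmap_tmult monom_map_monom_map[OF assms] imat2_pow_Suc)
qed

lemma monom_map_adj_monom_map:
  "z \<in> torus \<Longrightarrow>
    monom_map (imat2_adj B) (monom_map B z) = (fst z powi imat2_det B, snd z powi imat2_det B)"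
  by (cases z) (simp add: monom_map_monom_map imat2_adj_mult monom_map_Pair)

lemma inj_on_monom_map:
  assumes "\<bar>imat2_det B\<bar> = 1"
  shows "inj_on (monom_map B) (torus :: ('k::field \<times> 'k) set)"
proof
  fix z w :: "'k \<times> 'k"
  assume "z \<in> torus" "w \<in> torus" "monom_map B z = monom_map B w"
  then have "(fst z powi imat2_det B, snd z powi imat2_det B) = (fst w powi imat2_det B, snd w powi imat2_det B)"
    by (metis monom_map_adj_monom_map)
  moreover have "imat2_det B = 1 \<or> imat2_det B = -1" using assms by auto
  ultimately show "z = w" by (cases z; cases w) auto
qed

lemma power_nat_abs_eq_1_if_power_int_eq_1:
  fixes x :: "'k::field"
  assumes "x powi n = 1"
  shows "x ^ nat \<bar>n\<bar> = 1"
  using assms by (cases "n \<ge> 0") (auto simp: power_int_def power_inverse)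

lemma mem_torsion_if_monom_map_eq_1:
  fixes z :: "'k::field \<times> 'k"
  assumes "z \<in> torus" and "imat2_det B \<noteq> 0" and "monom_map B z = (1, 1)"
  shows "z \<in> torsion"
proof -
  have "monom_map (imat2_adj B) (1, 1) = ((1, 1) :: 'k \<times> 'k)"
    by (cases "imat2_adj B") (simp add: monom_map_Pair)
  then have "fst z powi imat2_det B = 1" "snd z powi imat2_det B = 1"
    using monom_map_adj_monom_map[OF assms(1), of B] assms(3) by simp_all
  then show ?thesis
    using assms(1,2) power_nat_abs_eq_1_if_power_int_eq_1
    unfolding torsion_def by (intro CollectI conjI exI[of _ "nat \<bar>imat2_det B\<bar>"]) auto
qed

lemma power_int_root_exists:
  fixes u :: "'k::alg_closed_field"
  assumes "n \<noteq> 0" and "u \<noteq> 0"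
  obtains x where "x \<noteq> 0" and "x powi n = u"
proof -
  obtain y :: 'k where y: "y ^ nat \<bar>n\<bar> = (if n > 0 then u else inverse u)"
    using nth_root_exists assms(1) by (metis zero_less_nat_eq zero_less_abs_iff)
  then have "y \<noteq> 0" using assms by (auto simp: power_0_left split: if_splits)
  moreover have "y powi n = u"
    using y assms(1) by (auto simp: power_int_def power_inverse split: if_splits)
  ultimately show thesis by (rule that)
qed

lemma monom_map_surj:
  fixes u :: "'k::alg_closed_field \<times> 'k"
  assumes "imat2_det B \<noteq> 0" and "u \<in> torus"
  obtains z where "z \<in> torus" and "monom_map B z = u"
proof -
  obtain u1 u2 where u: "u = (u1, u2)" by (cases u) auto
  obtain w1 where w1: "w1 \<noteq> 0" "w1 powi imat2_det B = u1"
    using power_int_root_exists assms u by auto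
  obtain w2 where w2: "w2 \<noteq> 0" "w2 powi imat2_det B = u2"
    using power_int_root_exists assms u by auto
  have "monom_map B (monom_map (imat2_adj B) (w1, w2)) = u"
    using w1 w2 by (simp add: monom_map_monom_map imat2_mult_adj monom_map_Pair u)
  moreover have "monom_map (imat2_adj B) (w1, w2) \<in> torus"
    using w1 w2 by (simp add: monom_map_in_torus)
  ultimately show thesis using that by blast
qed

lemma finite_roots_of_unity:
  assumes "m \<ge> 1"
  shows "finite {x::'k::idom. x ^ m = 1}"
proof -
  have "coeff (monom 1 m - 1 :: 'k poly) m = 1"
    using assms by (simp add: coeff_1)
  then have "monom 1 m - 1 \<noteq> (0 :: 'k poly)" by (metis coeff_0 zero_neq_one)
  moreover have "{x::'k. x ^ m = 1} = {x. poly (monom 1 m - 1) x = 0}"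
    by (simp add: poly_monom)
  ultimately show ?thesis by (metis poly_roots_finite)
qed

lemma power_int_root_of_unity: "(x::'k::field) ^ m = 1 \<Longrightarrow> (x powi a) ^ m = 1"
  by (metis mult.commute power_int_1_left power_int_mult power_int_of_nat)

lemma torsion_periodic:
  fixes z :: "'k::field \<times> 'k"
  assumes "\<bar>imat2_det B\<bar> = 1" and "z \<in> torsion"
  obtains j where "j \<ge> 1" and "monom_map (imat2_pow B j) z = z"
proof -
  obtain m where m: "m \<ge> 1" "fst z ^ m = 1" "snd z ^ m = 1" and z: "z \<in> torus"
    using assms(2) unfolding torsion_def by auto
  define S where "S = {w \<in> (torus :: ('k \<times> 'k) set). fst w ^ m = 1 \<and> snd w ^ m = 1}"
  have "finite S"
    by (rule finite_subset[of _ "{x. x ^ m = 1} \<times> {x. x ^ m = 1}"])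
      (auto simp: S_def finite_roots_of_unity[OF m(1)])
  have monom_map_S: "monom_map C w \<in> S" if "w \<in> S" for C w
    using that monom_map_in_torus[of w C]
    by (cases C; cases w) (simp add: S_def monom_map_Pair power_mult_distrib power_int_root_of_unity)
  define orbit where "orbit i = monom_map (imat2_pow B i) z" for i
  have "orbit i \<in> S" for i
    unfolding orbit_def by (rule monom_map_S) (use z m in \<open>simp add: S_def\<close>)
  then have "range orbit \<subseteq> S" by blast
  then have "\<not> inj orbit"
    using \<open>finite S\<close> by (meson finite_imageD finite_subset infinite_UNIV_nat)
  then obtain i j where "i < j" "orbit i = orbit j"
    by (metis linorder_neq_iff injI)
  then have "monom_map (imat2_pow B i) (monom_map (imat2_pow B (j - i)) z) = monom_map (imat2_pow B i) z"
    by (simp add: orbit_def monom_map_monom_map[OF z] flip: imat2_pow_add)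
  moreover have "inj_on (monom_map (imat2_pow B i)) torus"
    using assms(1) by (intro inj_on_monom_map) (simp add: imat2_det_pow power_abs)
  ultimately have "monom_map (imat2_pow B (j - i)) z = z"
    using z monom_map_in_torus by (metis inj_onD)
  then show thesis using \<open>i < j\<close> by (intro that[of "j - i"]) auto
qed

section \<open>Periodic points\<close>

lemma funpow_fixed_mult: "(f ^^ n) x = x \<Longrightarrow> (f ^^ (n * k)) x = x"
  by (metis funpow_mod_eq mod_mult_self1_is_0 funpow_0 id_apply)

lemma Per_tmap_eq_tmult_torsion:
  fixes \<alpha> \<beta> :: "'k::field"
  assumes aut: "is_torus_aut \<alpha> \<beta> M" and hyperbolic: "imat2_trace (imat2_pow M 2) \<ge> 3"
    and p: "p \<in> Per (tmap \<alpha> \<beta> M)"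
  shows "Per (tmap \<alpha> \<beta> M) = tmult p ` torsion"
proof -
  define f where "f = tmap \<alpha> \<beta> M"
  have det: "\<bar>imat2_det M\<bar> = 1" using aut by (simp add: is_torus_aut_def)
  obtain n where n: "n \<ge> 1" "(f ^^ n) p = p" and p_torus: "p \<in> torus"
    using p by (auto simp: Per_def f_def)
  show ?thesis
  proof (intro equalityI subsetI)
    fix q assume "q \<in> Per (tmap \<alpha> \<beta> M)"
    then obtain m where q: "q \<in> torus" "m \<ge> 1" "(f ^^ m) q = q" by (auto simp: Per_def f_def)
    define k where "k = 2 * (n * m)"
    have "(f ^^ (n * (2 * m))) p = p" "(f ^^ (m * (2 * n))) q = q"
      using funpow_fixed_mult[OF n(2)] funpow_fixed_mult[OF q(3)] by blast+
    then have fixed: "(f ^^ k) p = p" "(f ^^ k) q = q"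
      by (simp_all add: k_def ac_simps)
    define z where "z = (fst q / fst p, snd q / snd p)"
    have z: "z \<in> torus" "q = tmult p z"
      using p_torus q(1) by (auto simp: z_def tmult_def torus_def)
    have "tmult p (monom_map (imat2_pow M k) z) = tmult p z"
      using funpow_tmap_tmult[where n = k, OF z(1)] fixed z(2) by (simp add: f_def)
    then have "monom_map (imat2_pow M k) z = z" using tmult_left_cancel p_torus by blast
    then have "tmult z (monom_map (imat2_sub_id (imat2_pow M k)) z) = tmult z (1, 1)"
      using monom_map_eq_tmult_sub_id[OF z(1), of "imat2_pow M k"] by simp
    then have "monom_map (imat2_sub_id (imat2_pow M k)) z = (1, 1)"
      using tmult_left_cancel z(1) by blast
    moreover have "imat2_det (imat2_sub_id (imat2_pow M k)) \<noteq> 0"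
      using imat2_det_sub_id_pow_neq_0[OF imat2_det_sq[OF det] hyperbolic, of "n * m"] n q(2)
      by (simp add: k_def imat2_pow_mult)
    ultimately have "z \<in> torsion" using mem_torsion_if_monom_map_eq_1 z(1) by blast
    then show "q \<in> tmult p ` torsion" using z(2) by blast
  next
    fix q assume "q \<in> tmult p ` torsion"
    then obtain z where z: "z \<in> torsion" "q = tmult p z" by blast
    have "\<bar>imat2_det (imat2_pow M n)\<bar> = 1" using det by (simp add: imat2_det_pow power_abs)
    then obtain j where j: "j \<ge> 1" "monom_map (imat2_pow (imat2_pow M n) j) z = z"
      using torsion_periodic z(1) by blast
    have z_torus: "z \<in> torus" using z(1) by (simp add: torsion_def)
    have "(f ^^ (n * j)) q = q"
      using funpow_tmap_tmult[where n = "n * j", OF z_torus] funpow_fixed_mult[where k = j, OF n(2)] j(2) z(2)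
      by (simp add: f_def imat2_pow_mult)
    moreover have "q \<in> torus" using z(2) p_torus z_torus by (simp add: tmult_in_torus)
    ultimately show "q \<in> Per (tmap \<alpha> \<beta> M)"
      using n(1) j(1) unfolding Per_def f_def by (auto intro!: exI[of _ "n * j"])
  qed
qed

lemma Per_tmap_nonempty:
  fixes \<alpha> \<beta> :: "'k::alg_closed_field"
  assumes aut: "is_torus_aut \<alpha> \<beta> M" and hyperbolic: "imat2_trace (imat2_pow M 2) \<ge> 3"
  shows "Per (tmap \<alpha> \<beta> M) \<noteq> {}"
proof -
  define f where "f = tmap \<alpha> \<beta> M"
  define A where "A = imat2_pow M 2"
  have ab: "\<alpha> \<noteq> 0" "\<beta> \<noteq> 0" and det: "\<bar>imat2_det M\<bar> = 1"
    using aut by (auto simp: is_torus_aut_def)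
  obtain c1 c2 where c: "(f ^^ 2) (1, 1) = (c1, c2)" by fastforce
  have "c1 \<noteq> 0" "c2 \<noteq> 0"
    using funpow_tmap_in_torus[OF ab, of "(1, 1)" 2 M] c by (simp_all add: f_def)
  moreover have "imat2_det (imat2_sub_id A) \<noteq> 0"
    using imat2_det_sub_id_pow_neq_0[OF imat2_det_sq[OF det] hyperbolic, of 1] by (simp add: A_def imat2_pow_Suc)
  ultimately obtain z where z: "z \<in> torus" "monom_map (imat2_sub_id A) z = (inverse c1, inverse c2)"
    using monom_map_surj by (metis inverse_nonzero_iff_nonzero mem_torus_iff)
  have "(f ^^ 2) z = tmult (c1, c2) (monom_map A z)"
    using funpow_tmap_tmult[where n = 2 and p = "(1, 1)", OF z(1)] c by (simp add: f_def A_def)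
  also have "\<dots> = tmult (c1, c2) (tmult z (inverse c1, inverse c2))"
    using monom_map_eq_tmult_sub_id[OF z(1), of A] z(2) by simp
  also have "\<dots> = z"
    using \<open>c1 \<noteq> 0\<close> \<open>c2 \<noteq> 0\<close> by (cases z) simp
  finally have "z \<in> Per f"
    using z(1) unfolding Per_def by (auto intro!: exI[of _ 2])
  then show ?thesis by (auto simp: f_def)
qed

theorem proposition8p1:
  fixes \<alpha> \<beta> \<gamma> \<delta> :: "'k::alg_closed_field"
    and M N :: imat2
  assumes "is_torus_aut \<alpha> \<beta> M" and "is_torus_aut \<gamma> \<delta> N"
    and "loxodromic M" and "loxodromic N"
  shows "Per (tmap \<alpha> \<beta> M) \<inter> Per (tmap \<gamma> \<delta> N) \<noteq> {}
         \<longleftrightarrow> Per (tmap \<alpha> \<beta> M) = Per (tmap \<gamma> \<delta> N)"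
proof -
  have hyperbolic: "imat2_trace (imat2_pow M 2) \<ge> 3" "imat2_trace (imat2_pow N 2) \<ge> 3"
    using assms loxodromic_imp_trace_sq_ge_3 by (auto simp: is_torus_aut_def)
  show ?thesis
  proof
    assume "Per (tmap \<alpha> \<beta> M) \<inter> Per (tmap \<gamma> \<delta> N) \<noteq> {}"
    then obtain p where "p \<in> Per (tmap \<alpha> \<beta> M)" "p \<in> Per (tmap \<gamma> \<delta> N)" by blast
    then show "Per (tmap \<alpha> \<beta> M) = Per (tmap \<gamma> \<delta> N)"
      using Per_tmap_eq_tmult_torsion[OF assms(1) hyperbolic(1)]
        Per_tmap_eq_tmult_torsion[OF assms(2) hyperbolic(2)] by metis
  next
    assume "Per (tmap \<alpha> \<beta> M) = Per (tmap \<gamma> \<delta> N)"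
    then show "Per (tmap \<alpha> \<beta> M) \<inter> Per (tmap \<gamma> \<delta> N) \<noteq> {}"
      using Per_tmap_nonempty[OF assms(1) hyperbolic(1)] by simp
  qed
qed

end
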